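(* Let $\gamma\in(0,1)$ and, for each $N$, let $\omega$ have law $\mathbb{P}^{(N)}$ as in the context. Then for all $\beta\ge0$ and $h\in\mathbb{R}$, $$\mathbb{E}^{(N)}\Big[\frac1N\log Z_{N,\beta,h,\omega}\Big]\xrightarrow[N\to\infty]{}F(\beta,h):=\begin{cases}0 & \text{if } h\le-\beta,\\ \frac{F(h+\beta)}{2} & \text{if } -\beta<h<\beta,\\ \frac{F(h+\beta)+F(h-\beta)}{2} & \text{if } h\ge\beta.\end{cases}$$
   Context: Let $\tau=(\tau_n)_{n\ge0}$ be a renewal process with $\tau_0=0$ and interarrival law $K(n)=L(n)n^{-(1+\alpha)}$, $n\ge1$, where $\alpha\ge0$, $L:\mathbb{N}\to(0,\infty)$ is slowly varying and $\sum_nK(n)=1$; $\delta_n=\mathbf 1_{\{n\in\tau\}}$, $E$ denotes expectation over $\tau$. For $\omega$ independent of $\tau$, $Z_{N,\beta,h,\omega}=E\big[\exp\big(\sum_{n=1}^N(\beta\omega_n+h)\delta_n\big)\delta_N\big]$. The homogeneous free energy is $F(h):=\lim_{N\to\infty}\frac1N\log E\big[\exp\big(h\sum_{n=1}^N\delta_n\big)\delta_N\big]$ (which exists, is $\ge0$, and vanishes iff $h\le0$). $\mathbb{P}^{(N)}$ is the law of the stationary Markov chain $\omega=(\omega_n)_{n\ge0}$ on $\{-1,+1\}$ with transition matrix $Q^{(N)}=\begin{pmatrix}1-N^{-\gamma}&N^{-\gamma}\\N^{-\gamma}&1-N^{-\gamma}\end{pmatrix}$ and initial distribution $(1/2,1/2)$;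 $\mathbb{E}^{(N)}$ is the corresponding expectation. *)

theory Defs
  imports "HOL-Analysis.Analysis"
begin

definition slowly_varying :: "(nat \<Rightarrow> real) \<Rightarrow> bool" where
  "slowly_varying L \<longleftrightarrow> (\<forall>n. L n > 0) \<and>
     (\<forall>c::real. c > 0 \<longrightarrow> ((\<lambda>n. L (nat \<lfloor>c * real n\<rfloor>) / L n) \<longlonglongrightarrow> 1))"

definition prev_ren :: "nat set \<Rightarrow> nat \<Rightarrow> nat" where
  "prev_ren A n = Max (insert 0 {m \<in> A. m < n})"

(* Renewal configurations on {1..N} that contain N (this encodes the factor delta_N). *)
definition ren_configs :: "nat \<Rightarrow> nat set set" where
  "ren_configs N = {A. A \<subseteq> {1..N} \<and> N \<in> A}"

(* Probability under the renewal law with interarrival law K that tau \<inter> {1..N} = A. *)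
definition ren_weight :: "(nat \<Rightarrow> real) \<Rightarrow> nat set \<Rightarrow> real" where
  "ren_weight K A = (\<Prod>n\<in>A. K (n - prev_ren A n))"

(* Z_{N,beta,h,omega} = E[exp(sum_{n=1}^N (beta omega_n + h) delta_n) delta_N] *)
definition Zpin :: "(nat \<Rightarrow> real) \<Rightarrow> nat \<Rightarrow> real \<Rightarrow> real \<Rightarrow> (nat \<Rightarrow> real) \<Rightarrow> real" where
  "Zpin K N \<beta> h \<omega> = (\<Sum>A\<in>ren_configs N. ren_weight K A * exp (\<Sum>n\<in>A. \<beta> * \<omega> n + h))"

(* homogeneous partition function E[exp(h sum delta_n) delta_N] *)
definition Zhom :: "(nat \<Rightarrow> real) \<Rightarrow> nat \<Rightarrow> real \<Rightarrow> real" where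
  "Zhom K N h = (\<Sum>A\<in>ren_configs N. ren_weight K A * exp (h * real (card A)))"

definition Fhom :: "(nat \<Rightarrow> real) \<Rightarrow> real \<Rightarrow> real" where
  "Fhom K h = lim (\<lambda>N. ln (Zhom K N h) / real N)"

definition Qmat :: "real \<Rightarrow> nat \<Rightarrow> real \<Rightarrow> real \<Rightarrow> real" where
  "Qmat \<gamma> N x y = (if x = y then 1 - real N powr (-\<gamma>) else real N powr (-\<gamma>))"

(* E^{(N)}[g(omega)] for g depending on omega_0..omega_N: stationary chain, initial law (1/2,1/2) *)
definition EN :: "real \<Rightarrow> nat \<Rightarrow> ((nat \<Rightarrow> real) \<Rightarrow> real) \<Rightarrow> real" where
  "EN \<gamma> N g = (\<Sum>\<omega>\<in>PiE {0..N} (\<lambda>_. {-1, 1}).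
       (1/2) * (\<Prod>i\<in>{1..N}. Qmat \<gamma> N (\<omega> (i - 1)) (\<omega> i)) * g \<omega>)"

definition Fquenched :: "(nat \<Rightarrow> real) \<Rightarrow> real \<Rightarrow> real \<Rightarrow> real" where
  "Fquenched K \<beta> h =
     (if h \<le> -\<beta> then 0
      else if h < \<beta> then Fhom K (h + \<beta>) / 2
      else (Fhom K (h + \<beta>) + Fhom K (h - \<beta>)) / 2)"

end

theory Submission
  imports Defs "HOL-Real_Asymp.Real_Asymp"
begin

(* For a site potential v let Zpot K v n be the partition function constrained to renew at n;
   it satisfies the renewal recursion  Z(n) = (SUM m<n. Z(m) K(n-m)) e^(v n), and Zpin is the
   case v n = beta * omega_n + h.  The environment takes the values +1/-1 and switches only
   about N^(1-gamma) times, so the potential is piecewise constant with few blocks.  On a block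
   of constant value x the partition function is comparable with exp (F(x) * length):
   superadditivity and Fekete's lemma give Z <= exp (F(x) l) and Z >= exp ((F(x) - eps) l - C).
   Gluing blocks is free for the lower bound (superadditivity) and costs a polynomial factor
   for the upper bound (decomposition at the first renewal after the last switch).  Hence
   log Z_N(omega) = SUM_n F(beta omega_n + h) + O((log N) (1 + #switches)).  Under the
   stationary chain each omega_n is uniform on +1/-1 and switches occur with probability
   N^(-gamma), so the expectation of (1/N) log Z_N converges to (F(h+beta) + F(h-beta)) / 2,
   which equals the announced limit because F vanishes on (-oo, 0]. *)

fun Zpot :: "(nat \<Rightarrow> real) \<Rightarrow> (nat \<Rightarrow> real) \<Rightarrow> nat \<Rightarrow> real" where
  "Zpot K v 0 = 1"
| "Zpot K v (Suc n) = (\<Sum>m\<le>n. Zpot K v m * K (Suc n - m)) * exp (v (Suc n))"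

definition ending_at :: "nat \<Rightarrow> nat set set" where
  "ending_at m = {A. A \<subseteq> {1..m} \<and> Max (insert 0 A) = m}"

lemma ending_at_finite: "finite (ending_at m)"
  unfolding ending_at_def by (rule finite_subset[of _ "Pow {1..m}"]) auto

lemma ending_at_0: "ending_at 0 = {{}}"
  unfolding ending_at_def by auto

lemma ending_at_bound: "A \<in> ending_at m \<Longrightarrow> a \<in> A \<Longrightarrow> 1 \<le> a \<and> a \<le> m"
  unfolding ending_at_def by auto

lemma ending_at_eq_ren_configs:
  assumes "m \<ge> 1" shows "ending_at m = ren_configs m"
proof -
  have "Max (insert 0 A) = m \<longleftrightarrow> m \<in> A" if "A \<subseteq> {1..m}" for A
  proof -
    have fin: "finite A" using that finite_subset by blast
    show ?thesis
    proof
      assume "Max (insert 0 A) = m"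
      moreover have "Max (insert 0 A) \<in> insert 0 A" using fin by (intro Max_in) auto
      ultimately show "m \<in> A" using assms by auto
    qed (use fin that in \<open>intro Max_eqI, auto\<close>)
  qed
  then show ?thesis unfolding ending_at_def ren_configs_def by blast
qed

lemma ending_at_Suc_decomp:
  "ending_at (Suc n) = (\<lambda>(m, A). insert (Suc n) A) ` (SIGMA m:{..n}. ending_at m)"
proof (intro set_eqI iffI)
  fix B assume B: "B \<in> ending_at (Suc n)"
  then have sub: "B \<subseteq> {1..Suc n}" and SnB: "Suc n \<in> B"
    using ending_at_eq_ren_configs[of "Suc n"] unfolding ren_configs_def by auto
  let ?A = "B - {Suc n}"
  let ?m = "Max (insert 0 ?A)"
  have finA: "finite ?A" using sub finite_subset by blast
  have "?m \<le> n" using sub finA by (subst Max_le_iff) auto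
  moreover have "?A \<in> ending_at ?m"
  proof -
    have "x \<in> {1..?m}" if "x \<in> ?A" for x
      using sub finA that by (auto intro: Max_ge)
    then show ?thesis unfolding ending_at_def by blast
  qed
  moreover have "B = insert (Suc n) ?A" using SnB by auto
  ultimately show "B \<in> (\<lambda>(m, A). insert (Suc n) A) ` (SIGMA m:{..n}. ending_at m)"
    by (intro image_eqI[of _ _ "(?m, ?A)"]) auto
next
  fix B assume "B \<in> (\<lambda>(m, A). insert (Suc n) A) ` (SIGMA m:{..n}. ending_at m)"
  then obtain m A where "m \<le> n" "A \<in> ending_at m" "B = insert (Suc n) A" by auto
  then show "B \<in> ending_at (Suc n)"
    using ending_at_bound ending_at_eq_ren_configs[of "Suc n"] unfolding ren_configs_def
    by fastforce
qed

lemma ending_at_Suc_inj: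
  "inj_on (\<lambda>(m, A). insert (Suc n) A) (SIGMA m:{..n}. ending_at m)"
proof (rule inj_onI, clarsimp)
  fix m A m' A'
  assume a: "m \<le> n" "A \<in> ending_at m" "m' \<le> n" "A' \<in> ending_at m'"
    and eq: "insert (Suc n) A = insert (Suc n) A'"
  have "Suc n \<notin> A" "Suc n \<notin> A'" using a ending_at_bound by fastforce+
  then have "A = A'" using eq by (metis Diff_insert_absorb)
  then show "m = m' \<and> A = A'" using a(2,4) unfolding ending_at_def by auto
qed

lemma ren_weight_insert:
  assumes A: "A \<in> ending_at m" and "m \<le> n"
  shows "ren_weight K (insert (Suc n) A) = K (Suc n - m) * ren_weight K A"
proof -
  have fin: "finite A" using A unfolding ending_at_def by (auto intro: finite_subset)
  have lt: "a \<in> A \<Longrightarrow> a < Suc n" for a using ending_at_bound[OF A] assms(2) by fastforce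
  have "{x \<in> insert (Suc n) A. x < Suc n} = A" using lt by auto
  then have last: "prev_ren (insert (Suc n) A) (Suc n) = m"
    using A unfolding prev_ren_def ending_at_def by simp
  have "prev_ren (insert (Suc n) A) a = prev_ren A a" if "a \<in> A" for a
  proof -
    have "{x \<in> insert (Suc n) A. x < a} = {x \<in> A. x < a}" using lt that by force
    then show ?thesis unfolding prev_ren_def by simp
  qed
  then have "(\<Prod>a\<in>A. K (a - prev_ren (insert (Suc n) A) a)) = (\<Prod>a\<in>A. K (a - prev_ren A a))"
    by (intro prod.cong) auto
  moreover have "Suc n \<notin> A" using lt by blast
  ultimately show ?thesis
    unfolding ren_weight_def using last fin by simp
qed

lemma Zpot_eq_config_sum:
  "Zpot K v n = (\<Sum>A\<in>ending_at n. ren_weight K A * exp (\<Sum>j\<in>A. v j))"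
proof (induction n rule: less_induct)
  case (less n)
  show ?case
  proof (cases n)
    case 0 then show ?thesis by (simp add: ending_at_0 ren_weight_def)
  next
    case (Suc n')
    let ?g = "\<lambda>A. ren_weight K A * exp (\<Sum>j\<in>A. v j)"
    have "(\<Sum>A\<in>ending_at (Suc n'). ?g A) = (\<Sum>p\<in>(SIGMA m:{..n'}. ending_at m). ?g (insert (Suc n') (snd p)))"
      unfolding ending_at_Suc_decomp
      by (subst sum.reindex[OF ending_at_Suc_inj]) (simp add: case_prod_beta)
    also have "\<dots> = (\<Sum>m\<le>n'. \<Sum>A\<in>ending_at m. ?g (insert (Suc n') A))"
      by (subst sum.Sigma) (auto simp: ending_at_finite split_def)
    also have "\<dots> = (\<Sum>m\<le>n'. \<Sum>A\<in>ending_at m. ?g A * (K (Suc n' - m) * exp (v (Suc n'))))"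
    proof (intro sum.cong refl)
      fix m A assume m: "m \<in> {..n'}" and A: "A \<in> ending_at m"
      have "finite A" using A unfolding ending_at_def by (auto intro: finite_subset)
      moreover have "Suc n' \<notin> A" using ending_at_bound[OF A] m by fastforce
      ultimately show "?g (insert (Suc n') A) = ?g A * (K (Suc n' - m) * exp (v (Suc n')))"
        using ren_weight_insert[OF A] m by (simp add: exp_add)
    qed
    also have "\<dots> = Zpot K v (Suc n')"
      using less Suc by (simp add: sum_distrib_left sum_distrib_right mult_ac)
    finally show ?thesis using Suc by simp
  qed
qed

lemma Zpin_eq_Zpot: "N \<ge> 1 \<Longrightarrow> Zpin K N \<beta> h \<omega> = Zpot K (\<lambda>n. \<beta> * \<omega> n + h) N"
  unfolding Zpin_def Zpot_eq_config_sum ending_at_eq_ren_configs by simp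

lemma Zhom_eq_Zpot: "N \<ge> 1 \<Longrightarrow> Zhom K N h = Zpot K (\<lambda>_. h) N"
  unfolding Zhom_def Zpot_eq_config_sum ending_at_eq_ren_configs by (simp add: mult.commute)

lemma Zpot_pos:
  assumes "\<And>j. j \<ge> 1 \<Longrightarrow> K j > 0"
  shows "Zpot K v n > 0"
proof (induction n rule: less_induct)
  case (less n)
  show ?case
  proof (cases n)
    case (Suc n')
    have "(\<Sum>m\<le>n'. Zpot K v m * K (Suc n' - m)) > 0"
      using less Suc assms by (intro sum_pos mult_pos_pos) auto
    then show ?thesis using Suc by simp
  qed simp
qed

lemma Zpot_cong:
  assumes "\<And>i. 1 \<le> i \<Longrightarrow> i \<le> n \<Longrightarrow> v i = w i"
  shows "Zpot K v n = Zpot K w n"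
  using assms
proof (induction n rule: less_induct)
  case (less n)
  show ?case
  proof (cases n)
    case (Suc n')
    have "Zpot K v m = Zpot K w m" if "m \<le> n'" for m
      using less.IH[of m] less.prems Suc that by auto
    moreover have "v (Suc n') = w (Suc n')" using less.prems Suc by auto
    ultimately show ?thesis using Suc by simp
  qed simp
qed

text \<open>Keeping only the trajectory that jumps directly from 0 to n.\<close>
lemma Zpot_ge_direct_jump:
  assumes "\<And>j. j \<ge> 1 \<Longrightarrow> K j > 0" and "n \<ge> 1"
  shows "K n * exp (v n) \<le> Zpot K v n"
proof -
  obtain n' where n: "n = Suc n'" using assms(2) by (cases n) auto
  have "Zpot K v 0 * K (Suc n' - 0) \<le> (\<Sum>m\<le>n'. Zpot K v m * K (Suc n' - m))"
    using Zpot_pos[OF assms(1)] assms(1)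
    by (intro member_le_sum) (auto intro!: mult_nonneg_nonneg less_imp_le)
  then show ?thesis unfolding n by (simp add: mult_right_mono)
qed

text \<open>Superadditivity: forcing a renewal at c decouples the two sides.\<close>
lemma Zpot_superadditive:
  assumes Kpos: "\<And>j. j \<ge> 1 \<Longrightarrow> K j > 0"
  shows "Zpot K v c * Zpot K (\<lambda>i. v (i + c)) n \<le> Zpot K v (c + n)"
proof (induction n rule: less_induct)
  case (less n)
  show ?case
  proof (cases n)
    case (Suc n')
    let ?E = "exp (v (Suc (c + n')))"
    let ?t = "\<lambda>m. Zpot K v m * K (Suc (c + n') - m)"
    have t_nonneg: "?t m \<ge> 0" if "m \<le> c + n'" for m
      using Zpot_pos[OF Kpos] Kpos[of "Suc (c + n') - m"] that by (simp add: less_imp_le)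
    have "Zpot K v c * Zpot K (\<lambda>i. v (i + c)) n =
        (\<Sum>j\<le>n'. Zpot K v c * Zpot K (\<lambda>i. v (i + c)) j * K (Suc n' - j)) * ?E"
      using Suc by (simp add: sum_distrib_left sum_distrib_right mult.assoc add.commute[of n' c])
    also have "\<dots> \<le> (\<Sum>j\<le>n'. ?t (c + j)) * ?E"
    proof (intro mult_right_mono sum_mono)
      fix j assume j: "j \<in> {..n'}"
      have "Zpot K v c * Zpot K (\<lambda>i. v (i + c)) j \<le> Zpot K v (c + j)"
        using less.IH[of j] Suc j by simp
      moreover have "K (Suc n' - j) \<ge> 0"
        using Kpos[of "Suc n' - j"] j by (simp add: less_imp_le)
      moreover have "Suc (c + n') - (c + j) = Suc n' - j" by simp
      ultimately show "Zpot K v c * Zpot K (\<lambda>i. v (i + c)) j * K (Suc n' - j) \<le> ?t (c + j)"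
        by (metis mult_right_mono)
    qed simp
    also have "(\<Sum>j\<le>n'. ?t (c + j)) = (\<Sum>m\<in>(\<lambda>j. c + j) ` {..n'}. ?t m)"
      by (subst sum.reindex) (auto simp: inj_on_def)
    also have "\<dots> \<le> (\<Sum>m\<le>c + n'. ?t m)"
      using t_nonneg by (intro sum_mono2) auto
    finally show ?thesis
      using Suc by (simp add: mult_right_mono)
  qed simp
qed

lemma Zpot_shift_Suc:
  assumes "n \<le> b"
  shows "(\<Sum>j\<in>{n..b}. Zpot K (\<lambda>i. v (i + n)) (j - n) * K (Suc b - j)) * exp (v (Suc b))
       = Zpot K (\<lambda>i. v (i + n)) (Suc b - n)"
proof -
  have "(\<Sum>j\<in>{n..b}. Zpot K (\<lambda>i. v (i + n)) (j - n) * K (Suc b - j))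
      = (\<Sum>m\<le>b - n. Zpot K (\<lambda>i. v (i + n)) m * K (Suc (b - n) - m))"
    unfolding atLeast0AtMost[symmetric]
    using sum.shift_bounds_cl_nat_ivl[of "\<lambda>j. Zpot K (\<lambda>i. v (i + n)) (j - n) * K (Suc b - j)" 0 n "b - n"]
      assms by (simp add: Suc_diff_le add.commute)
  moreover have "Suc (b - n) + n = Suc b" using assms by simp
  ultimately show ?thesis using assms by (simp add: Suc_diff_le)
qed

text \<open>Weight of the trajectories whose last renewal up to c is followed by a jump to n.\<close>
definition Zcross :: "(nat \<Rightarrow> real) \<Rightarrow> (nat \<Rightarrow> real) \<Rightarrow> nat \<Rightarrow> nat \<Rightarrow> real" where
  "Zcross K v c n = (\<Sum>m\<le>c. Zpot K v m * K (n - m)) * exp (v n)"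

lemma Zpot_first_renewal_after:
  assumes "c < b"
  shows "Zpot K v b = (\<Sum>n\<in>{c<..b}. Zcross K v c n * Zpot K (\<lambda>i. v (i + n)) (b - n))"
  using assms
proof (induction b rule: less_induct)
  case (less b)
  then obtain b' where b: "b = Suc b'" and cb: "c \<le> b'" by (cases b) auto
  let ?E = "exp (v (Suc b'))"
  let ?R = "\<lambda>n j. Zcross K v c n * Zpot K (\<lambda>i. v (i + n)) (j - n) * K (Suc b' - j) * ?E"
  have split: "{..b'} = {..c} \<union> {c<..b'}" using cb by auto
  have "Zpot K v b = Zcross K v c (Suc b') + (\<Sum>j\<in>{c<..b'}. Zpot K v j * K (Suc b' - j) * ?E)"
    unfolding b Zpot.simps split Zcross_def
    by (subst sum.union_disjoint) (auto simp: sum_distrib_right distrib_right)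
  also have "(\<Sum>j\<in>{c<..b'}. Zpot K v j * K (Suc b' - j) * ?E) =
      (\<Sum>j\<in>{c<..b'}. \<Sum>n\<in>{n\<in>{c<..b'}. n \<le> j}. ?R n j)"
  proof (intro sum.cong refl)
    fix j assume j: "j \<in> {c<..b'}"
    have "{n\<in>{c<..b'}. n \<le> j} = {c<..j}" using j by auto
    then show "Zpot K v j * K (Suc b' - j) * ?E = (\<Sum>n\<in>{n\<in>{c<..b'}. n \<le> j}. ?R n j)"
      using less.IH[of j] j b by (simp add: sum_distrib_right)
  qed
  also have "\<dots> = (\<Sum>n\<in>{c<..b'}. \<Sum>j\<in>{j\<in>{c<..b'}. n \<le> j}. ?R n j)"
    by (rule sum.swap_restrict) auto
  also have "\<dots> = (\<Sum>n\<in>{c<..b'}. Zcross K v c n * Zpot K (\<lambda>i. v (i + n)) (b - n))"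
  proof (intro sum.cong refl)
    fix n assume n: "n \<in> {c<..b'}"
    have "{j\<in>{c<..b'}. n \<le> j} = {n..b'}" using n by auto
    then have "(\<Sum>j\<in>{j\<in>{c<..b'}. n \<le> j}. ?R n j) = Zcross K v c n *
        ((\<Sum>j\<in>{n..b'}. Zpot K (\<lambda>i. v (i + n)) (j - n) * K (Suc b' - j)) * ?E)"
      by (simp add: sum_distrib_left sum_distrib_right mult_ac)
    then show "(\<Sum>j\<in>{j\<in>{c<..b'}. n \<le> j}. ?R n j) = Zcross K v c n * Zpot K (\<lambda>i. v (i + n)) (b - n)"
      using Zpot_shift_Suc[of n b' K v] n b by simp
  qed
  finally have "Zpot K v b = Zcross K v c (Suc b') + (\<Sum>n\<in>{c<..b'}. Zcross K v c n * Zpot K (\<lambda>i. v (i + n)) (b - n))" .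
  moreover have "{c<..b} = insert (Suc b') {c<..b'}" using b cb by auto
  ultimately show ?case using b by simp
qed

lemma Zpot_glue_block_upper:
  assumes Kpos: "\<And>j. j \<ge> 1 \<Longrightarrow> K j > 0" and Kle: "\<And>j. j \<ge> 1 \<Longrightarrow> K j \<le> 1"
    and cb: "c < b" and const: "\<And>i. i \<in> {c<..b} \<Longrightarrow> v i = x"
    and \<Phi>: "\<Phi> \<ge> 0" and block: "\<And>l. Zpot K (\<lambda>_. x) l \<le> exp (\<Phi> * real l)"
    and prefix: "\<And>m. m \<le> c \<Longrightarrow> Zpot K v m \<le> G"
  shows "Zpot K v b \<le> real (b - c) * ((real c + 1) * G * exp x * exp (\<Phi> * real (b - c)))"
proof -
  have Zpos: "\<And>u n. Zpot K u n > 0" using Zpot_pos[OF Kpos] .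
  have term_bound: "Zcross K v c n * Zpot K (\<lambda>i. v (i + n)) (b - n)
      \<le> (real c + 1) * G * exp x * exp (\<Phi> * real (b - c))" if n: "n \<in> {c<..b}" for n
  proof -
    have "Zpot K v m * K (n - m) \<le> G" if "m \<le> c" for m
    proof -
      have "K (n - m) \<le> 1" "K (n - m) > 0" using Kle Kpos n that by auto
      then have "Zpot K v m * K (n - m) \<le> Zpot K v m"
        using Zpos[of v m] by (simp add: mult_left_le)
      then show ?thesis using prefix[OF that] by linarith
    qed
    then have "(\<Sum>m\<le>c. Zpot K v m * K (n - m)) \<le> (real c + 1) * G"
      using sum_mono[of "{..c}" "\<lambda>m. Zpot K v m * K (n - m)" "\<lambda>_. G"] by (simp add: add.commute)
    then have cross: "Zcross K v c n \<le> (real c + 1) * G * exp x"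
      unfolding Zcross_def using const[OF n] by simp
    have "Zpot K (\<lambda>i. v (i + n)) (b - n) = Zpot K (\<lambda>_. x) (b - n)"
      by (rule Zpot_cong) (use const n in auto)
    also have "\<dots> \<le> exp (\<Phi> * real (b - n))" by (rule block)
    also have "\<dots> \<le> exp (\<Phi> * real (b - c))" using \<Phi> n by (auto intro!: mult_left_mono)
    finally have shifted: "Zpot K (\<lambda>i. v (i + n)) (b - n) \<le> exp (\<Phi> * real (b - c))" .
    have "G \<ge> 0" using prefix[of 0] Zpos[of v 0] by simp
    then show ?thesis using mult_mono[OF cross shifted] Zpos by (simp add: less_imp_le)
  qed
  have "Zpot K v b \<le> (\<Sum>n\<in>{c<..b}. (real c + 1) * G * exp x * exp (\<Phi> * real (b - c)))"
    unfolding Zpot_first_renewal_after[OF cb] by (rule sum_mono) (rule term_bound)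
  also have "\<dots> = real (b - c) * ((real c + 1) * G * exp x * exp (\<Phi> * real (b - c)))"
    by (simp only: sum_constant card_greaterThanAtMost)
  finally show ?thesis .
qed

definition switches :: "(nat \<Rightarrow> real) \<Rightarrow> nat \<Rightarrow> nat set" where
  "switches v b = {i \<in> {1..<b}. v i \<noteq> v (Suc i)}"

definition last_switch :: "(nat \<Rightarrow> real) \<Rightarrow> nat \<Rightarrow> nat" where
  "last_switch v b = (if switches v b = {} then 0 else Max (switches v b))"

definition nblocks :: "(nat \<Rightarrow> real) \<Rightarrow> nat \<Rightarrow> nat" where
  "nblocks v b = (if b = 0 then 0 else Suc (card (switches v b)))"

lemma finite_switches [simp]: "finite (switches v b)"
  unfolding switches_def by simp

lemma last_switch_lt:
  assumes "b \<ge> 1" shows "last_switch v b < b"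
proof (cases "switches v b = {}")
  case False
  then have "Max (switches v b) \<in> switches v b" by (intro Max_in) simp_all
  then have "Max (switches v b) < b" unfolding switches_def by simp
  then show ?thesis using False unfolding last_switch_def by simp
qed (use assms in \<open>simp add: last_switch_def\<close>)

lemma switch_le_last_switch: "i \<in> switches v b \<Longrightarrow> i \<le> last_switch v b"
  unfolding last_switch_def by (auto intro: Max_ge)

lemma last_switch_const:
  assumes "i \<in> {last_switch v b<..b}"
  shows "v i = v b"
proof -
  have "i \<le> b" using assms by simp
  then show ?thesis
  proof (induction i rule: inc_induct)
    case (step j)
    have "j > last_switch v b" using assms step.hyps by simp
    then have "j \<notin> switches v b" using switch_le_last_switch by force
    moreover have "j \<in> {1..<b}" using assms step.hyps by auto
    ultimately show ?case using step.IH unfolding switches_def by auto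
  qed simp
qed

lemma nblocks_last_switch:
  assumes "b \<ge> 1"
  shows "nblocks v b = Suc (nblocks v (last_switch v b))"
proof (cases "switches v b = {}")
  case True
  then show ?thesis using assms unfolding nblocks_def last_switch_def by simp
next
  case False
  let ?c = "last_switch v b"
  have c: "?c \<in> switches v b" "\<And>i. i \<in> switches v b \<Longrightarrow> i \<le> ?c"
    using Max_in[OF finite_switches False] switch_le_last_switch
    unfolding last_switch_def by (simp_all add: False)
  then have "?c \<ge> 1" unfolding switches_def by simp
  moreover have "switches v b = insert ?c (switches v ?c)"
  proof (intro set_eqI iffI)
    fix i assume i: "i \<in> switches v b"
    show "i \<in> insert ?c (switches v ?c)"
    proof (cases "i = ?c")
      case False
      then have "i < ?c" using c(2)[OF i] by simp
      then show ?thesis using i unfolding switches_def by simp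
    qed simp
  next
    fix i assume "i \<in> insert ?c (switches v ?c)"
    then show "i \<in> switches v b" using c(1) unfolding switches_def by auto
  qed
  moreover have "?c \<notin> switches v ?c" unfolding switches_def by simp
  ultimately show ?thesis using assms unfolding nblocks_def by simp
qed

lemma nblocks_mono:
  assumes "m \<le> c" shows "nblocks v m \<le> nblocks v c"
proof (cases "m = 0")
  case False
  have "switches v m \<subseteq> switches v c" using assms unfolding switches_def by auto
  then have "card (switches v m) \<le> card (switches v c)" by (intro card_mono) simp_all
  then show ?thesis using assms False unfolding nblocks_def by simp
qed (simp add: nblocks_def)

lemma sum_last_block:
  assumes "c \<le> b" and "\<And>i. i \<in> {c<..b} \<Longrightarrow> v i = v b"
  shows "(\<Sum>i\<in>{1..b}. f (v i)) = (\<Sum>i\<in>{1..c}. f (v i)) + real (b - c) * (f (v b) :: real)"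
proof -
  have split: "{1..b} = {1..c} \<union> {c<..b}" using assms(1) by auto
  have "(\<Sum>i\<in>{1..b}. f (v i)) = (\<Sum>i\<in>{1..c}. f (v i)) + (\<Sum>i\<in>{c<..b}. f (v i))"
    unfolding split by (rule sum.union_disjoint) auto
  also have "(\<Sum>i\<in>{c<..b}. f (v i)) = (\<Sum>i\<in>{c<..b}. f (v b))"
    by (intro sum.cong refl arg_cong[where f = f] assms(2))
  finally show ?thesis by simp
qed

text \<open>Upper bound for a piecewise constant potential: on each block the partition function
  is at most \<open>exp (\<Phi> \<cdot> length)\<close>, and each of the \<open>nblocks v b\<close> gluings costs at most
  \<open>(N + 1)\<^sup>2 exp B\<close>.\<close>
lemma Zpot_upper_blocks:
  fixes \<Phi> :: "real \<Rightarrow> real"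
  assumes Kpos: "\<And>j. j \<ge> 1 \<Longrightarrow> K j > 0" and Kle: "\<And>j. j \<ge> 1 \<Longrightarrow> K j \<le> 1"
    and \<Phi>_nonneg: "\<And>i. 1 \<le> i \<Longrightarrow> i \<le> N \<Longrightarrow> \<Phi> (v i) \<ge> 0"
    and block: "\<And>i l. 1 \<le> i \<Longrightarrow> i \<le> N \<Longrightarrow> Zpot K (\<lambda>_. v i) l \<le> exp (\<Phi> (v i) * real l)"
    and bound: "\<And>i. 1 \<le> i \<Longrightarrow> i \<le> N \<Longrightarrow> v i \<le> B" and "B \<ge> 0"
  shows "b \<le> N \<Longrightarrow>
    Zpot K v b \<le> exp ((\<Sum>i\<in>{1..b}. \<Phi> (v i)) + (2 * ln (real N + 1) + B) * real (nblocks v b))"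
proof (induction b rule: less_induct)
  case (less b)
  define D where "D = 2 * ln (real N + 1) + B"
  define S where "S b = (\<Sum>i\<in>{1..b}. \<Phi> (v i))" for b
  have D_nonneg: "D \<ge> 0" unfolding D_def using \<open>B \<ge> 0\<close> by simp
  show ?case
  proof (cases "b = 0")
    case False
    let ?c = "last_switch v b"
    have b: "1 \<le> b" "b \<le> N" using False less.prems by auto
    have cb: "?c < b" using last_switch_lt b by blast
    have const: "\<And>i. i \<in> {?c<..b} \<Longrightarrow> v i = v b" using last_switch_const by blast
    define G where "G = exp (S ?c + D * real (nblocks v ?c))"
    have prefix: "Zpot K v m \<le> G" if "m \<le> ?c" for m
    proof -
      have "S m \<le> S ?c"
        unfolding S_def using that cb b \<Phi>_nonneg by (intro sum_mono2) auto
      moreover have "real (nblocks v m) \<le> real (nblocks v ?c)" using nblocks_mono[OF that] by simp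
      ultimately have "S m + D * real (nblocks v m) \<le> S ?c + D * real (nblocks v ?c)"
        using D_nonneg by (simp add: add_mono mult_left_mono)
      moreover have "Zpot K v m \<le> exp (S m + D * real (nblocks v m))"
        using less.IH[of m] that cb b unfolding S_def D_def by simp
      ultimately show ?thesis unfolding G_def by (meson exp_le_cancel_iff order_trans)
    qed
    have poly: "real (b - ?c) * (real ?c + 1) \<le> exp (2 * ln (real N + 1))"
    proof -
      have "real (b - ?c) * (real ?c + 1) \<le> (real N + 1) * (real N + 1)"
        using cb b by (intro mult_mono) auto
      also have "\<dots> = exp (ln (real N + 1) + ln (real N + 1))"
        unfolding exp_add by simp
      finally show ?thesis by (simp only: mult_2)
    qed
    let ?X = "exp (\<Phi> (v b) * real (b - ?c))"
    have "Zpot K v b \<le> (real (b - ?c) * (real ?c + 1)) * (G * exp (v b) * ?X)"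
      using Zpot_glue_block_upper[OF Kpos Kle cb const \<Phi>_nonneg[OF b] block[OF b] prefix]
      by (simp only: mult_ac)
    also have "\<dots> \<le> exp (2 * ln (real N + 1)) * (G * exp B * ?X)"
    proof (rule mult_mono[OF poly])
      show "G * exp (v b) * ?X \<le> G * exp B * ?X"
        using bound[OF b] by (intro mult_right_mono mult_left_mono) (auto simp: G_def)
    qed (auto simp: G_def)
    also have "\<dots> = exp (2 * ln (real N + 1) + (S ?c + D * real (nblocks v ?c)) + B + \<Phi> (v b) * real (b - ?c))"
      unfolding G_def by (simp only: exp_add mult_ac)
    also have "\<dots> = exp (S b + D * real (nblocks v b))"
    proof -
      have "S b = S ?c + real (b - ?c) * \<Phi> (v b)"
        unfolding S_def by (rule sum_last_block[where v = v, OF less_imp_le[OF cb] const])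
      then show ?thesis unfolding nblocks_last_switch[OF b(1)] D_def by (simp add: algebra_simps)
    qed
    finally show ?thesis unfolding S_def D_def .
  qed (simp add: nblocks_def)
qed

text \<open>Lower bound for a piecewise constant potential: by superadditivity we may cut at
  every switch, and each block loses at most C compared with \<open>(\<Phi> - \<epsilon>) \<cdot> length\<close>.\<close>
lemma Zpot_lower_blocks:
  fixes \<Phi> :: "real \<Rightarrow> real"
  assumes Kpos: "\<And>j. j \<ge> 1 \<Longrightarrow> K j > 0" and "C \<ge> 0"
    and block: "\<And>i l. 1 \<le> i \<Longrightarrow> i \<le> N \<Longrightarrow> l \<ge> 1 \<Longrightarrow>
      (\<Phi> (v i) - \<epsilon>) * real l - C \<le> ln (Zpot K (\<lambda>_. v i) l)"
  shows "b \<le> N \<Longrightarrow> (\<Sum>i\<in>{1..b}. \<Phi> (v i) - \<epsilon>) - C * real (nblocks v b) \<le> ln (Zpot K v b)"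
proof (induction b rule: less_induct)
  case (less b)
  define S where "S b = (\<Sum>i\<in>{1..b}. \<Phi> (v i) - \<epsilon>)" for b
  show ?case
  proof (cases "b = 0")
    case False
    let ?c = "last_switch v b"
    have b: "1 \<le> b" "b \<le> N" using False less.prems by auto
    have cb: "?c < b" using last_switch_lt b by blast
    have const: "\<And>i. i \<in> {?c<..b} \<Longrightarrow> v i = v b" using last_switch_const by blast
    have Zpos: "\<And>u n. Zpot K u n > 0" using Zpot_pos[OF Kpos] .
    have prefix: "S ?c - C * real (nblocks v ?c) \<le> ln (Zpot K v ?c)"
      using less.IH[of ?c] cb b unfolding S_def by simp
    have "Zpot K (\<lambda>i. v (i + ?c)) (b - ?c) = Zpot K (\<lambda>_. v b) (b - ?c)"
      by (rule Zpot_cong, rule const) (use cb in auto)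
    then have last_block: "(\<Phi> (v b) - \<epsilon>) * real (b - ?c) - C \<le> ln (Zpot K (\<lambda>i. v (i + ?c)) (b - ?c))"
      using block[OF b, of "b - last_switch v b"] cb by simp
    have "ln (Zpot K v ?c * Zpot K (\<lambda>i. v (i + ?c)) (b - ?c)) \<le> ln (Zpot K v b)"
      using Zpot_superadditive[OF Kpos, where v = v and c = "last_switch v b" and n = "b - last_switch v b"] cb Zpos by (simp add: ln_mono)
    then have glue: "ln (Zpot K v ?c) + ln (Zpot K (\<lambda>i. v (i + ?c)) (b - ?c)) \<le> ln (Zpot K v b)"
      using Zpos by (simp add: ln_mult_pos)
    have "S b = S ?c + real (b - ?c) * (\<Phi> (v b) - \<epsilon>)"
      unfolding S_def
      by (rule sum_last_block[where v = v and f = "\<lambda>x. \<Phi> x - \<epsilon>", OF less_imp_le[OF cb] const])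
    then show ?thesis
      using prefix last_block glue unfolding nblocks_last_switch[OF b(1)] S_def
      by (simp add: algebra_simps)
  qed (simp add: nblocks_def)
qed

lemma superadditive_iterate:
  fixes a :: "nat \<Rightarrow> real"
  assumes superadd: "\<And>m n. a m + a n \<le> a (m + n)"
  shows "real q * a m + a r \<le> a (q * m + r)"
proof (induction q)
  case (Suc q)
  have "a m + a (q * m + r) \<le> a (m + (q * m + r))" by (rule superadd)
  then show ?case using Suc by (simp add: algebra_simps)
qed simp

text \<open>Linear lower bound behind Fekete's lemma: writing \<open>n = q m + r\<close> with \<open>r < m\<close>,
  superadditivity gives \<open>a n \<ge> n \<cdot> a m / m - R\<close> with R independent of n.\<close>
lemma superadditive_linear_lower:
  fixes a :: "nat \<Rightarrow> real"
  assumes superadd: "\<And>m n. a m + a n \<le> a (m + n)" and "m \<ge> 1"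
  obtains R where "\<And>n. real n * (a m / real m) - R \<le> a n"
proof
  define t where "t = a m / real m"
  define \<mu> where "\<mu> = Min (a ` {..<m})"
  fix n
  define q where "q = n div m"
  define r where "r = n mod m"
  have nqr: "n = q * m + r" and rm: "r < m"
    unfolding q_def r_def using \<open>m \<ge> 1\<close> by simp_all
  have "\<mu> \<le> a r" unfolding \<mu>_def using rm by (intro Min_le) auto
  moreover have "real q * a m = real (q * m) * t" unfolding t_def using \<open>m \<ge> 1\<close> by simp
  moreover have "real q * a m + a r \<le> a n"
    unfolding nqr by (rule superadditive_iterate[of a, OF superadd])
  ultimately have an: "real (q * m) * t + \<mu> \<le> a n" by linarith
  have qm: "real (q * m) \<le> real n" "real n - real m \<le> real (q * m)" using nqr rm by linarith+
  have "real n * t - real m * \<bar>t\<bar> \<le> real (q * m) * t"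
  proof (cases "t \<ge> 0")
    case True
    then have "(real n - real m) * t \<le> real (q * m) * t" using qm by (intro mult_right_mono) auto
    then show ?thesis using True by (simp add: algebra_simps)
  next
    case False
    then have "real n * t \<le> real (q * m) * t" using qm by (intro mult_right_mono_neg) auto
    moreover have "0 \<le> real m * \<bar>t\<bar>" by simp
    ultimately show ?thesis by linarith
  qed
  then show "real n * (a m / real m) - (real m * \<bar>t\<bar> + \<bar>\<mu>\<bar>) \<le> a n"
    using an unfolding t_def by linarith
qed

lemma fekete:
  fixes a :: "nat \<Rightarrow> real"
  assumes superadd: "\<And>m n. a m + a n \<le> a (m + n)" and linear: "\<And>n. a n \<le> M * real n"
  shows "(\<lambda>n. a n / real n) \<longlonglongrightarrow> (SUP n\<in>{1..}. a n / real n)"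
    and "\<And>n. n \<ge> 1 \<Longrightarrow> a n / real n \<le> (SUP n\<in>{1..}. a n / real n)"
proof -
  let ?s = "SUP n\<in>{1..}. a n / real n"
  have bdd: "bdd_above ((\<lambda>n. a n / real n) ` {1..})"
    using linear by (intro bdd_aboveI2[of _ _ M]) (simp add: divide_le_eq mult.commute)
  show upper: "\<And>n. n \<ge> 1 \<Longrightarrow> a n / real n \<le> ?s"
    by (rule cSUP_upper[OF _ bdd]) simp
  show "(\<lambda>n. a n / real n) \<longlonglongrightarrow> ?s"
  proof (rule order_tendstoI)
    fix y assume "?s < y"
    then show "eventually (\<lambda>n. a n / real n < y) sequentially"
      using upper by (intro eventually_sequentiallyI[of 1]) (auto intro: le_less_trans)
  next
    fix y assume "y < ?s"
    then obtain m where m: "m \<ge> 1" "y < a m / real m"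
      using less_cSUP_iff[OF _ bdd] by auto
    obtain R where R: "\<And>n. real n * (a m / real m) - R \<le> a n"
      using superadditive_linear_lower[of a, OF superadd m(1)] by blast
    have "(\<lambda>n. a m / real m - R / real n) \<longlonglongrightarrow> a m / real m - 0"
      by (intro tendsto_intros)
    then have "eventually (\<lambda>n. y < a m / real m - R / real n) sequentially"
      using m(2) by (intro order_tendstoD(1)) auto
    then show "eventually (\<lambda>n. y < a n / real n) sequentially"
      using eventually_gt_at_top[of 0]
    proof eventually_elim
      case (elim n)
      have "a m / real m - R / real n = (real n * (a m / real m) - R) / real n"
        using elim(2) by (simp add: field_simps)
      also have "\<dots> \<le> a n / real n" using R[of n] elim(2) by (intro divide_right_mono) auto
      finally show ?case using elim(1) by linarith
    qed
  qed
qed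

text \<open>Standing assumptions on the renewal kernel: positive, summing to one, and decaying at
  most polynomially (which makes the free energy nonnegative).\<close>
locale renewal_kernel =
  fixes K :: "nat \<Rightarrow> real" and c0 p :: real
  assumes K_pos: "\<And>j. j \<ge> 1 \<Longrightarrow> K j > 0"
    and K_sums: "(\<lambda>n. K (Suc n)) sums 1"
    and K_poly_lower: "\<And>n. n \<ge> 1 \<Longrightarrow> c0 - p * ln (real n) \<le> ln (K n)"
begin

lemma K_partial_sum: "(\<Sum>m\<le>n. K (Suc n - m)) \<le> 1"
proof -
  have "(\<Sum>m\<le>n. K (Suc n - m)) = (\<Sum>i\<le>n. K (Suc i))"
    by (rule sum.reindex_bij_witness[of _ "\<lambda>i. n - i" "\<lambda>i. n - i"]) (auto simp: Suc_diff_le)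
  also have "\<dots> \<le> (\<Sum>i. K (Suc i))"
    using K_sums K_pos by (intro sum_le_suminf) (auto simp: sums_summable less_imp_le)
  also have "\<dots> = 1" using K_sums sums_unique by metis
  finally show ?thesis .
qed

lemma K_le_1:
  assumes "j \<ge> 1" shows "K j \<le> 1"
proof -
  obtain n where j: "j = Suc n" using assms by (cases j) auto
  have "K (Suc n - 0) \<le> (\<Sum>m\<le>n. K (Suc n - m))"
    using K_pos by (intro member_le_sum) (auto intro: less_imp_le)
  then show ?thesis using K_partial_sum[of n] j by simp
qed

lemma Zpot_gt_0: "Zpot K v n > 0"
  using Zpot_pos K_pos by blast

text \<open>A priori bound: with \<open>\<Sum> K \<le> 1\<close> each renewal gains at most \<open>e\<^sup>x\<close>.\<close>
lemma Zpot_const_upper: "Zpot K (\<lambda>_. x) n \<le> exp (max x 0 * real n)"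
proof (induction n rule: less_induct)
  case (less n)
  show ?case
  proof (cases n)
    case (Suc n')
    let ?E = "exp (max x 0 * real n')"
    have "(\<Sum>m\<le>n'. Zpot K (\<lambda>_. x) m * K (Suc n' - m)) \<le> (\<Sum>m\<le>n'. ?E * K (Suc n' - m))"
    proof (rule sum_mono)
      fix m assume m: "m \<in> {..n'}"
      have "Zpot K (\<lambda>_. x) m \<le> exp (max x 0 * real m)" using less.IH[of m] Suc m by auto
      also have "\<dots> \<le> ?E" using m by (auto intro!: mult_left_mono)
      finally show "Zpot K (\<lambda>_. x) m * K (Suc n' - m) \<le> ?E * K (Suc n' - m)"
        using K_pos[of "Suc n' - m"] m by (intro mult_right_mono) (auto simp: Suc_diff_le)
    qed
    also have "\<dots> \<le> ?E"
      using K_partial_sum[of n'] by (simp add: sum_distrib_left[symmetric])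
    finally have "Zpot K (\<lambda>_. x) n \<le> ?E * exp x"
      using Suc by (simp add: mult_right_mono)
    also have "\<dots> \<le> exp (max x 0 * real n)"
      unfolding exp_add[symmetric] using Suc by (auto simp: algebra_simps)
    finally show ?thesis .
  qed simp
qed

definition logZ :: "real \<Rightarrow> nat \<Rightarrow> real" where
  "logZ x n = ln (Zpot K (\<lambda>_. x) n)"

lemma logZ_superadditive: "logZ x m + logZ x n \<le> logZ x (m + n)"
proof -
  have "Zpot K (\<lambda>_. x) m * Zpot K (\<lambda>_. x) n \<le> Zpot K (\<lambda>_. x) (m + n)"
    using Zpot_superadditive[OF K_pos, where v = "\<lambda>_. x" and c = m and n = n] by simp
  then show ?thesis
    unfolding logZ_def using Zpot_gt_0 by (simp add: ln_mult_pos[symmetric] ln_mono)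
qed

lemma logZ_upper: "logZ x n \<le> max x 0 * real n"
  unfolding logZ_def using ln_mono[OF Zpot_const_upper Zpot_gt_0] by simp

lemma Fhom_limit: "(\<lambda>n. logZ x n / real n) \<longlonglongrightarrow> Fhom K x"
  and Fhom_upper: "n \<ge> 1 \<Longrightarrow> logZ x n / real n \<le> Fhom K x"
proof -
  have seq: "(\<lambda>N. ln (Zhom K N x) / real N) = (\<lambda>n. logZ x n / real n)"
  proof
    fix N show "ln (Zhom K N x) / real N = logZ x N / real N"
      by (cases "N = 0") (auto simp: Zhom_eq_Zpot logZ_def)
  qed
  have lim: "(\<lambda>n. logZ x n / real n) \<longlonglongrightarrow> (SUP n\<in>{1..}. logZ x n / real n)"
    by (rule fekete(1)[OF logZ_superadditive logZ_upper])
  then have F: "Fhom K x = (SUP n\<in>{1..}. logZ x n / real n)"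
    unfolding Fhom_def seq by (rule limI)
  show "(\<lambda>n. logZ x n / real n) \<longlonglongrightarrow> Fhom K x" using lim F by simp
  show "n \<ge> 1 \<Longrightarrow> logZ x n / real n \<le> Fhom K x"
    unfolding F by (rule fekete(2)[OF logZ_superadditive logZ_upper])
qed

lemma Zpot_const_le_Fhom: "Zpot K (\<lambda>_. x) n \<le> exp (Fhom K x * real n)"
proof (cases "n = 0")
  case False
  then have "logZ x n \<le> Fhom K x * real n" using Fhom_upper[of n x] by (simp add: divide_le_eq)
  then show ?thesis unfolding logZ_def using Zpot_gt_0 by (simp add: ln_le_cancel_iff[symmetric] del: ln_le_cancel_iff)
qed simp

text \<open>The direct jump \<open>0 \<rightarrow> n\<close> alone gives \<open>logZ x n \<ge> c0 - p ln n + x\<close>, so \<open>F \<ge> 0\<close>.\<close>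
lemma Fhom_nonneg: "Fhom K x \<ge> 0"
proof (rule LIMSEQ_le[OF _ Fhom_limit])
  show "(\<lambda>n. (c0 - p * ln (real n) + x) / real n) \<longlonglongrightarrow> 0" by real_asymp
  have "(c0 - p * ln (real n) + x) / real n \<le> logZ x n / real n" if n: "n \<ge> 1" for n
  proof -
    have "ln (K n * exp x) \<le> logZ x n"
      unfolding logZ_def using Zpot_ge_direct_jump[where K = K, OF K_pos n] K_pos[OF n] Zpot_gt_0 by simp
    then have "c0 - p * ln (real n) + x \<le> logZ x n"
      using K_poly_lower[OF n] K_pos[OF n] by (simp add: ln_mult_pos)
    then show ?thesis by (intro divide_right_mono) auto
  qed
  then show "\<exists>N. \<forall>n\<ge>N. (c0 - p * ln (real n) + x) / real n \<le> logZ x n / real n" by blast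
qed

text \<open>For \<open>x \<le> 0\<close> the a priori bound gives \<open>F(x) \<le> 0\<close>, so the free energy vanishes there.\<close>
lemma Fhom_eq_0: assumes "x \<le> 0" shows "Fhom K x = 0"
proof -
  have "logZ x n / real n \<le> 0" for n
    using logZ_upper[of x n] assms by (simp add: divide_nonpos_nonneg)
  then have "Fhom K x \<le> 0" by (intro LIMSEQ_le_const2[OF Fhom_limit]) auto
  then show ?thesis using Fhom_nonneg[of x] by linarith
qed

text \<open>Uniform lower bound on the homogeneous partition functions, from the convergence of
  \<open>logZ x l / l\<close>: the finitely many small l are absorbed in the constant.\<close>
lemma Zpot_const_lower:
  assumes "\<epsilon> > 0"
  obtains C where "C \<ge> 0" "\<And>l. l \<ge> 1 \<Longrightarrow> (Fhom K x - \<epsilon>) * real l - C \<le> ln (Zpot K (\<lambda>_. x) l)"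
proof -
  have "eventually (\<lambda>n. Fhom K x - \<epsilon> < logZ x n / real n) sequentially"
    using Fhom_limit[of x] assms by (intro order_tendstoD(1)) auto
  then obtain L where L: "\<And>n. n \<ge> L \<Longrightarrow> Fhom K x - \<epsilon> < logZ x n / real n"
    unfolding eventually_sequentially by blast
  define C where "C = (\<Sum>l<L. \<bar>(Fhom K x - \<epsilon>) * real l - logZ x l\<bar>)"
  have C: "C \<ge> 0" unfolding C_def by (intro sum_nonneg) auto
  have "(Fhom K x - \<epsilon>) * real l - C \<le> ln (Zpot K (\<lambda>_. x) l)" if l: "l \<ge> 1" for l
  proof (cases "l \<ge> L")
    case True
    then have "(Fhom K x - \<epsilon>) * real l < logZ x l" using L[of l] l by (simp add: less_divide_eq)
    then show ?thesis using C unfolding logZ_def by linarith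
  next
    case False
    then have "\<bar>(Fhom K x - \<epsilon>) * real l - logZ x l\<bar> \<le> C"
      unfolding C_def
      by (intro member_le_sum[where f = "\<lambda>l. \<bar>(Fhom K x - \<epsilon>) * real l - logZ x l\<bar>"]) auto
    then show ?thesis unfolding logZ_def by linarith
  qed
  with C that show ?thesis by blast
qed

end

lemma sum_PiE_insert:
  assumes "x \<notin> S"
  shows "(\<Sum>g\<in>PiE (insert x S) T. f g) = (\<Sum>y\<in>T x. \<Sum>g\<in>PiE S T. f (g(x := y)))"
proof -
  have "(\<Sum>g\<in>PiE (insert x S) T. f g) = (\<Sum>p\<in>T x \<times> PiE S T. f ((snd p)(x := fst p)))"
    unfolding PiE_insert_eq by (subst sum.reindex[OF inj_combinator[OF assms]]) (simp add: case_prod_beta)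
  also have "\<dots> = (\<Sum>y\<in>T x. \<Sum>g\<in>PiE S T. f (g(x := y)))"
    by (simp add: sum.cartesian_product split_def)
  finally show ?thesis .
qed

abbreviation paths :: "nat \<Rightarrow> (nat \<Rightarrow> real) set" where
  "paths n \<equiv> PiE {0..n} (\<lambda>_. {-1, 1})"

definition path_weight :: "real \<Rightarrow> nat \<Rightarrow> nat \<Rightarrow> (nat \<Rightarrow> real) \<Rightarrow> real" where
  "path_weight \<gamma> N n w = (1/2) * (\<Prod>i\<in>{1..n}. Qmat \<gamma> N (w (i - 1)) (w i))"

definition Echain :: "real \<Rightarrow> nat \<Rightarrow> nat \<Rightarrow> ((nat \<Rightarrow> real) \<Rightarrow> real) \<Rightarrow> real" where
  "Echain \<gamma> N n g = (\<Sum>w\<in>paths n. path_weight \<gamma> N n w * g w)"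

lemma EN_eq_Echain: "EN \<gamma> N g = Echain \<gamma> N N g"
  unfolding EN_def Echain_def path_weight_def by simp

lemma path_value: "w \<in> paths n \<Longrightarrow> i \<le> n \<Longrightarrow> w i = 1 \<or> w i = -1"
  by (auto simp: PiE_def Pi_def)

lemma Echain_Suc:
  "Echain \<gamma> N (Suc n) g =
     Echain \<gamma> N n (\<lambda>w. \<Sum>y\<in>{-1, 1}. Qmat \<gamma> N (w n) y * g (w(Suc n := y)))"
proof -
  have weight: "path_weight \<gamma> N (Suc n) (w(Suc n := y)) = path_weight \<gamma> N n w * Qmat \<gamma> N (w n) y"
    for w y
  proof -
    have "(\<Prod>i\<in>{1..n}. Qmat \<gamma> N ((w(Suc n := y)) (i - 1)) ((w(Suc n := y)) i)) =
        (\<Prod>i\<in>{1..n}. Qmat \<gamma> N (w (i - 1)) (w i))"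
      by (intro prod.cong refl) auto
    then show ?thesis unfolding path_weight_def by simp
  qed
  have "Echain \<gamma> N (Suc n) g =
      (\<Sum>y\<in>{-1, 1}. \<Sum>w\<in>paths n. path_weight \<gamma> N (Suc n) (w(Suc n := y)) * g (w(Suc n := y)))"
    unfolding Echain_def atLeast0_atMost_Suc by (rule sum_PiE_insert) simp
  also have "\<dots> = (\<Sum>w\<in>paths n. \<Sum>y\<in>{-1, 1}. path_weight \<gamma> N n w * Qmat \<gamma> N (w n) y * g (w(Suc n := y)))"
    unfolding weight by (rule sum.swap)
  also have "\<dots> = Echain \<gamma> N n (\<lambda>w. \<Sum>y\<in>{-1, 1}. Qmat \<gamma> N (w n) y * g (w(Suc n := y)))"
    unfolding Echain_def by (simp add: sum_distrib_left distrib_left mult.assoc)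
  finally show ?thesis .
qed

lemma Echain_0: "Echain \<gamma> N 0 (\<lambda>w. f (w 0)) = (f 1 + f (-1)) / 2"
proof -
  have "Echain \<gamma> N 0 (\<lambda>w. f (w 0)) = (\<Sum>y\<in>{-1, 1::real}. (1/2) * f y)"
    unfolding Echain_def path_weight_def
    using sum_PiE_insert[where x = 0 and S = "{}" and T = "\<lambda>_. {-1, 1::real}"
        and f = "\<lambda>w. 1 / 2 * f (w 0)"] by simp
  then show ?thesis by simp
qed

lemma Qmat_row_sum: "a \<in> {-1, 1} \<Longrightarrow> (\<Sum>y\<in>{-1, 1::real}. Qmat \<gamma> N a y) = 1"
  unfolding Qmat_def by auto

text \<open>The uniform law on \<open>{-1, 1}\<close> is stationary for the symmetric matrix \<open>Qmat\<close>.\<close>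
lemma Echain_last_site: "Echain \<gamma> N i (\<lambda>w. f (w i)) = (f 1 + f (-1)) / 2"
proof (induction i arbitrary: f)
  case 0 then show ?case by (rule Echain_0)
next
  case (Suc i)
  define g where "g a = (\<Sum>y\<in>{-1, 1::real}. Qmat \<gamma> N a y * f y)" for a
  have "Echain \<gamma> N (Suc i) (\<lambda>w. f (w (Suc i))) = Echain \<gamma> N i (\<lambda>w. g (w i))"
    unfolding Echain_Suc g_def by simp
  also have "\<dots> = (g 1 + g (-1)) / 2" by (rule Suc.IH)
  also have "\<dots> = (f 1 + f (-1)) / 2" unfolding g_def Qmat_def by (simp add: algebra_simps)
  finally show ?case .
qed

lemma Echain_const: "Echain \<gamma> N n (\<lambda>_. c) = c"
  using Echain_last_site[of \<gamma> N n "\<lambda>_. c"] by simp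

lemma Echain_extend:
  assumes "\<And>w w'. (\<And>j. j \<le> m \<Longrightarrow> w j = w' j) \<Longrightarrow> g w = g w'"
  shows "Echain \<gamma> N (m + k) g = Echain \<gamma> N m g"
proof (induction k)
  case (Suc k)
  have update: "g (w(Suc (m + k) := y)) = g w" for w y by (rule assms) auto
  have "Echain \<gamma> N (Suc (m + k)) g = Echain \<gamma> N (m + k) g"
    unfolding Echain_Suc update unfolding Echain_def
  proof (intro sum.cong refl)
    fix w assume "w \<in> paths (m + k)"
    then have "(\<Sum>y\<in>{-1, 1}. Qmat \<gamma> N (w (m + k)) y) = 1" by (intro Qmat_row_sum) auto
    then show "path_weight \<gamma> N (m + k) w * (\<Sum>y\<in>{-1, 1}. Qmat \<gamma> N (w (m + k)) y * g w)
        = path_weight \<gamma> N (m + k) w * g w"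
      by (simp add: sum_distrib_right[symmetric])
  qed
  then show ?case using Suc by simp
qed simp

lemma Echain_site:
  assumes "i \<le> n"
  shows "Echain \<gamma> N n (\<lambda>w. f (w i)) = (f 1 + f (-1)) / 2"
  using Echain_extend[of i "\<lambda>w. f (w i)" \<gamma> N "n - i"] Echain_last_site[of \<gamma> N i f] assms by simp

lemma Echain_switch:
  assumes "Suc i \<le> n"
  shows "Echain \<gamma> N n (\<lambda>w. if w i \<noteq> w (Suc i) then 1 else 0) = real N powr (-\<gamma>)"
proof -
  let ?g = "\<lambda>w. if w i \<noteq> w (Suc i) then 1 else (0::real)"
  have "Echain \<gamma> N n ?g = Echain \<gamma> N (Suc i) ?g"
    using Echain_extend[of "Suc i" ?g \<gamma> N "n - Suc i"] assms by simp
  also have "\<dots> = Echain \<gamma> N i (\<lambda>_. real N powr (-\<gamma>))"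
    unfolding Echain_Suc unfolding Echain_def
  proof (intro sum.cong refl)
    fix w assume "w \<in> paths i"
    then have "w i \<in> {-1, 1}" by auto
    then show "path_weight \<gamma> N i w * (\<Sum>y\<in>{-1, 1}. Qmat \<gamma> N (w i) y * ?g (w(Suc i := y)))
        = path_weight \<gamma> N i w * real N powr (-\<gamma>)"
      unfolding Qmat_def by auto
  qed
  finally show ?thesis by (simp add: Echain_const)
qed

lemma Qmat_nonneg:
  assumes "\<gamma> \<ge> 0" shows "Qmat \<gamma> N a b \<ge> 0"
proof (cases "N = 0")
  case False
  then have "real N powr \<gamma> \<ge> 1" using assms by (intro ge_one_powr_ge_zero) auto
  then have "real N powr (-\<gamma>) \<le> 1" by (simp add: powr_minus divide_simps)
  then show ?thesis unfolding Qmat_def by auto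
qed (simp add: Qmat_def)

lemma Echain_mono:
  assumes "\<gamma> \<ge> 0" and "\<And>w. w \<in> paths n \<Longrightarrow> f w \<le> g w"
  shows "Echain \<gamma> N n f \<le> Echain \<gamma> N n g"
  unfolding Echain_def path_weight_def using assms Qmat_nonneg
  by (intro sum_mono mult_left_mono) (auto intro: prod_nonneg)

lemma Echain_add: "Echain \<gamma> N n (\<lambda>w. f w + g w) = Echain \<gamma> N n f + Echain \<gamma> N n g"
  unfolding Echain_def by (simp add: distrib_left sum.distrib)

lemma Echain_scale: "Echain \<gamma> N n (\<lambda>w. c * f w) = c * Echain \<gamma> N n f"
  unfolding Echain_def by (simp add: sum_distrib_left mult_ac)

lemma Echain_sum: "Echain \<gamma> N n (\<lambda>w. \<Sum>i\<in>I. f i w) = (\<Sum>i\<in>I. Echain \<gamma> N n (f i))"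
  unfolding Echain_def by (simp add: sum_distrib_left) (rule sum.swap)

lemma card_switches_eq_sum:
  "real (card (switches w n)) = (\<Sum>i\<in>{1..<n}. if w i \<noteq> w (Suc i) then 1 else 0)"
  unfolding switches_def by (simp add: sum.If_cases Int_def)

lemma Echain_switches: "Echain \<gamma> N n (\<lambda>w. real (card (switches w n))) = real (n - 1) * real N powr (-\<gamma>)"
  unfolding card_switches_eq_sum Echain_sum by (simp add: Echain_switch)

lemma Echain_block_bound:
  "Echain \<gamma> N N (\<lambda>w. ((\<Sum>i\<in>{1..N}. \<Phi> (\<beta> * w i + h)) + c * (1 + real (card (switches w N))) + e) / real N)
     = (real N * ((\<Phi> (h + \<beta>) + \<Phi> (h - \<beta>)) / 2) + c * (1 + real (N - 1) * real N powr (-\<gamma>)) + e) / real N"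
proof -
  have sites: "Echain \<gamma> N N (\<lambda>w. \<Sum>i\<in>{1..N}. \<Phi> (\<beta> * w i + h)) = real N * ((\<Phi> (h + \<beta>) + \<Phi> (h - \<beta>)) / 2)"
  proof -
    have "Echain \<gamma> N N (\<lambda>w. \<Phi> (\<beta> * w i + h)) = (\<Phi> (h + \<beta>) + \<Phi> (h - \<beta>)) / 2"
      if "i \<in> {1..N}" for i
      using Echain_site[where i = i and n = N and f = "\<lambda>y. \<Phi> (\<beta> * y + h)"] that
      by (simp add: add.commute)
    then have "(\<Sum>i\<in>{1..N}. Echain \<gamma> N N (\<lambda>w. \<Phi> (\<beta> * w i + h)))
        = (\<Sum>i\<in>{1..N}. (\<Phi> (h + \<beta>) + \<Phi> (h - \<beta>)) / 2)"
      by (rule sum.cong[OF refl])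
    then show ?thesis unfolding Echain_sum by simp
  qed
  have "Echain \<gamma> N N (\<lambda>w. ((\<Sum>i\<in>{1..N}. \<Phi> (\<beta> * w i + h)) + c * (1 + real (card (switches w N))) + e) / real N)
      = Echain \<gamma> N N (\<lambda>w. (1 / real N) * (\<Sum>i\<in>{1..N}. \<Phi> (\<beta> * w i + h))
          + ((c / real N) * real (card (switches w N)) + (c + e) / real N))"
    by (rule arg_cong[where f = "Echain \<gamma> N N"], rule ext) (simp add: add_divide_distrib ring_distribs)
  also have "\<dots> = (1 / real N) * (real N * ((\<Phi> (h + \<beta>) + \<Phi> (h - \<beta>)) / 2))
      + ((c / real N) * (real (N - 1) * real N powr (-\<gamma>)) + (c + e) / real N)"
    unfolding Echain_add Echain_scale Echain_const Echain_switches sites ..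
  also have "\<dots> = (real N * ((\<Phi> (h + \<beta>) + \<Phi> (h - \<beta>)) / 2) + c * (1 + real (N - 1) * real N powr (-\<gamma>)) + e) / real N"
    by (simp add: add_divide_distrib ring_distribs)
  finally show ?thesis .
qed

lemma slowly_varying_half_ratio:
  assumes "slowly_varying L"
  shows "(\<lambda>n. L (n div 2) / L n) \<longlonglongrightarrow> 1"
proof -
  have "nat \<lfloor>(1/2) * real n\<rfloor> = n div 2" for n :: nat
  proof -
    have "(1/2) * real n = real n / real (2::nat)" by simp
    then show ?thesis by (simp only: floor_divide_of_nat_eq nat_int)
  qed
  moreover have "(\<lambda>n. L (nat \<lfloor>(1/2) * real n\<rfloor>) / L n) \<longlonglongrightarrow> 1"
    using assms unfolding slowly_varying_def by (auto dest: spec[of _ "1/2"])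
  ultimately show ?thesis by simp
qed

text \<open>A slowly varying L cannot decay like \<open>1/n\<close>: \<open>n L(n)\<close> is bounded away from 0, since
  halving n eventually changes L by less than a factor 2.\<close>
lemma slowly_varying_lower:
  assumes sv: "slowly_varying L"
  obtains \<delta> where "\<delta> > 0" "\<And>n. n \<ge> 1 \<Longrightarrow> \<delta> \<le> real n * L n"
proof -
  have L_pos: "\<And>n. L n > 0" using sv unfolding slowly_varying_def by blast
  have "eventually (\<lambda>n. L (n div 2) / L n < 2) sequentially"
    using slowly_varying_half_ratio[OF sv] by (intro order_tendstoD(2)) auto
  then obtain n0 where n0: "\<And>n. n \<ge> n0 \<Longrightarrow> L (n div 2) < 2 * L n"
    unfolding eventually_sequentially using L_pos by (metis divide_less_eq)
  define n1 where "n1 = max n0 2"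
  define \<delta> where "\<delta> = Min ((\<lambda>m. real m * L m) ` {1..n1})"
  have "\<delta> > 0" unfolding \<delta>_def using L_pos n1_def by (subst Min_gr_iff) auto
  moreover have "\<delta> \<le> real n * L n" if "n \<ge> 1" for n
    using that
  proof (induction n rule: less_induct)
    case (less n)
    show ?case
    proof (cases "n \<le> n1")
      case True
      then show ?thesis unfolding \<delta>_def using less.prems by (intro Min_le) auto
    next
      case False
      then have "n \<ge> n0" "n \<ge> 2" unfolding n1_def by auto
      then have half: "1 \<le> n div 2" "n div 2 < n" and "L (n div 2) < 2 * L n" using n0 by auto
      then have "real (n div 2) * L (n div 2) \<le> (2 * real (n div 2)) * L n"
        by (simp add: mult_left_mono)
      also have "\<dots> \<le> real n * L n" using L_pos[of n] by (intro mult_right_mono) linarith+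
      finally show ?thesis using less.IH[OF half(2,1)] by linarith
    qed
  qed
  ultimately show ?thesis using that by blast
qed

lemma renewal_kernel_of_regular_variation:
  assumes sv: "slowly_varying L"
    and K_def: "\<And>n. n \<ge> 1 \<Longrightarrow> K n = L n * real n powr (-(1 + \<alpha>))"
    and K_sums: "(\<lambda>n. K (Suc n)) sums 1"
  obtains c0 where "renewal_kernel K c0 (2 + \<alpha>)"
proof -
  have L_pos: "\<And>n. L n > 0" using sv unfolding slowly_varying_def by blast
  obtain \<delta> where \<delta>: "\<delta> > 0" "\<And>n. n \<ge> 1 \<Longrightarrow> \<delta> \<le> real n * L n"
    using slowly_varying_lower[OF sv] by blast
  have "ln \<delta> - (2 + \<alpha>) * ln (real n) \<le> ln (K n)" if n: "n \<ge> 1" for n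
  proof -
    have "ln \<delta> \<le> ln (real n * L n)" using \<delta> n by (intro ln_mono) auto
    then have "ln \<delta> - ln (real n) \<le> ln (L n)" using n L_pos[of n] by (simp add: ln_mult_pos)
    moreover have "ln (K n) = ln (L n) - (1 + \<alpha>) * ln (real n)"
      using K_def[OF n] L_pos[of n] n by (simp add: ln_mult_pos algebra_simps)
    ultimately show ?thesis by (simp add: algebra_simps)
  qed
  then have "renewal_kernel K (ln \<delta>) (2 + \<alpha>)"
    using K_def L_pos K_sums by unfold_locales simp_all
  then show ?thesis by (rule that)
qed

lemma nblocks_affine_le:
  assumes "N \<ge> 1"
  shows "real (nblocks (\<lambda>n. \<beta> * \<omega> n + h) N) \<le> 1 + real (card (switches \<omega> N))"
proof -
  have "switches (\<lambda>n. \<beta> * \<omega> n + h) N \<subseteq> switches \<omega> N" unfolding switches_def by auto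
  then have "card (switches (\<lambda>n. \<beta> * \<omega> n + h) N) \<le> card (switches \<omega> N)" by (intro card_mono) simp_all
  then show ?thesis using assms unfolding nblocks_def by simp
qed

lemma tendsto_squeeze_eps:
  fixes a u r :: "nat \<Rightarrow> real"
  assumes upper: "\<And>N. N \<ge> 1 \<Longrightarrow> a N \<le> T + u N" and u: "u \<longlonglongrightarrow> 0"
    and lower: "\<And>\<epsilon>. \<epsilon> > 0 \<Longrightarrow> \<exists>C. \<forall>N\<ge>1. T - \<epsilon> - C * r N \<le> a N" and r: "r \<longlonglongrightarrow> 0"
  shows "a \<longlonglongrightarrow> T"
proof (rule order_tendstoI)
  fix y assume "T < y"
  then have "eventually (\<lambda>N. u N < y - T) sequentially" using u by (intro order_tendstoD(2)) auto
  then show "eventually (\<lambda>N. a N < y) sequentially"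
    using eventually_ge_at_top[of 1] by eventually_elim (use upper in fastforce)
next
  fix y assume "y < T"
  define \<epsilon> where "\<epsilon> = (T - y) / 2"
  have "\<epsilon> > 0" using \<open>y < T\<close> unfolding \<epsilon>_def by simp
  then obtain C where C: "\<And>N. N \<ge> 1 \<Longrightarrow> T - \<epsilon> - C * r N \<le> a N" using lower by blast
  have "(\<lambda>N. C * r N) \<longlonglongrightarrow> C * 0" by (intro tendsto_mult tendsto_const r)
  then have "eventually (\<lambda>N. C * r N < \<epsilon>) sequentially" using \<open>\<epsilon> > 0\<close> by (intro order_tendstoD(2)) auto
  then show "eventually (\<lambda>N. y < a N) sequentially"
    using eventually_ge_at_top[of 1]
  proof eventually_elim
    case (elim N)
    then show ?case using C[OF elim(2)] unfolding \<epsilon>_def by (simp add: field_simps)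
  qed
qed

lemma switch_rate_mono: "real (N - 1) * real N powr (-\<gamma>) \<le> real N * real N powr (-\<gamma>)"
  by (intro mult_right_mono) auto

context renewal_kernel
begin

lemma log_Zpin_upper:
  assumes N: "N \<ge> 1" and \<omega>: "\<omega> \<in> paths N" and "\<beta> \<ge> 0"
  shows "ln (Zpin K N \<beta> h \<omega>) \<le> (\<Sum>i\<in>{1..N}. Fhom K (\<beta> * \<omega> i + h))
     + (2 * ln (real N + 1) + (\<bar>h\<bar> + \<beta>)) * (1 + real (card (switches \<omega> N)))"
proof -
  let ?v = "\<lambda>n. \<beta> * \<omega> n + h"
  let ?D = "2 * ln (real N + 1) + (\<bar>h\<bar> + \<beta>)"
  have bound: "?v i \<le> \<bar>h\<bar> + \<beta>" if "i \<le> N" for i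
    using path_value[OF \<omega> that] \<open>\<beta> \<ge> 0\<close> by auto
  have "Zpot K ?v N \<le> exp ((\<Sum>i\<in>{1..N}. Fhom K (?v i)) + ?D * real (nblocks ?v N))"
    by (rule Zpot_upper_blocks[where \<Phi> = "Fhom K" and N = N])
      (use \<open>\<beta> \<ge> 0\<close> in \<open>auto intro: K_pos K_le_1 Fhom_nonneg Zpot_const_le_Fhom bound\<close>)
  then have "ln (Zpin K N \<beta> h \<omega>) \<le> (\<Sum>i\<in>{1..N}. Fhom K (?v i)) + ?D * real (nblocks ?v N)"
    unfolding Zpin_eq_Zpot[OF N] using Zpot_gt_0 by (simp add: ln_le_cancel_iff[symmetric] del: ln_le_cancel_iff)
  also have "?D * real (nblocks ?v N) \<le> ?D * (1 + real (card (switches \<omega> N)))"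
    using nblocks_affine_le[OF N] \<open>\<beta> \<ge> 0\<close> by (intro mult_left_mono) auto
  finally show ?thesis by simp
qed

lemma log_Zpin_lower:
  assumes N: "N \<ge> 1" and \<omega>: "\<omega> \<in> paths N" and "C \<ge> 0"
    and block: "\<And>x l. x \<in> {h + \<beta>, h - \<beta>} \<Longrightarrow> l \<ge> 1 \<Longrightarrow>
      (Fhom K x - \<epsilon>) * real l - C \<le> ln (Zpot K (\<lambda>_. x) l)"
  shows "(\<Sum>i\<in>{1..N}. Fhom K (\<beta> * \<omega> i + h)) - C * (1 + real (card (switches \<omega> N))) - real N * \<epsilon>
     \<le> ln (Zpin K N \<beta> h \<omega>)"
proof -
  let ?v = "\<lambda>n. \<beta> * \<omega> n + h"
  have site_values: "?v i \<in> {h + \<beta>, h - \<beta>}" if "i \<le> N" for i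
    using path_value[OF \<omega> that] by auto
  have "(\<Sum>i\<in>{1..N}. Fhom K (?v i) - \<epsilon>) - C * real (nblocks ?v N) \<le> ln (Zpot K ?v N)"
    by (rule Zpot_lower_blocks[where \<Phi> = "Fhom K" and N = N])
      (use K_pos \<open>C \<ge> 0\<close> block[OF site_values] in auto)
  moreover have "C * real (nblocks ?v N) \<le> C * (1 + real (card (switches \<omega> N)))"
    using nblocks_affine_le[OF N] \<open>C \<ge> 0\<close> by (intro mult_left_mono) auto
  ultimately show ?thesis unfolding Zpin_eq_Zpot[OF N] by (simp add: sum_subtractf)
qed

text \<open>Since F vanishes on \<open>(-\<infinity>, 0]\<close>, the piecewise formula defining \<open>Fquenched\<close> is just
  the average of \<open>F (h + \<beta>)\<close> and \<open>F (h - \<beta>)\<close>.\<close>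
lemma Fquenched_eq_average:
  assumes "\<beta> \<ge> 0"
  shows "Fquenched K \<beta> h = (Fhom K (h + \<beta>) + Fhom K (h - \<beta>)) / 2"
  using assms Fhom_eq_0[of "h + \<beta>"] Fhom_eq_0[of "h - \<beta>"] unfolding Fquenched_def by auto

lemma quenched_upper:
  assumes "\<gamma> \<ge> 0" "\<beta> \<ge> 0" and N: "N \<ge> 1"
  shows "EN \<gamma> N (\<lambda>\<omega>. ln (Zpin K N \<beta> h \<omega>) / real N)
    \<le> (Fhom K (h + \<beta>) + Fhom K (h - \<beta>)) / 2
       + (2 * ln (real N + 1) + (\<bar>h\<bar> + \<beta>)) * ((1 + real N * real N powr (-\<gamma>)) / real N)"
proof -
  let ?D = "2 * ln (real N + 1) + (\<bar>h\<bar> + \<beta>)"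
  have "EN \<gamma> N (\<lambda>\<omega>. ln (Zpin K N \<beta> h \<omega>) / real N) \<le> Echain \<gamma> N N (\<lambda>\<omega>.
      ((\<Sum>i\<in>{1..N}. Fhom K (\<beta> * \<omega> i + h)) + ?D * (1 + real (card (switches \<omega> N))) + 0) / real N)"
    unfolding EN_eq_Echain using log_Zpin_upper[OF N _ \<open>\<beta> \<ge> 0\<close>]
    by (intro Echain_mono divide_right_mono \<open>\<gamma> \<ge> 0\<close>) auto
  also have "\<dots> = (Fhom K (h + \<beta>) + Fhom K (h - \<beta>)) / 2
      + ?D * ((1 + real (N - 1) * real N powr (-\<gamma>)) / real N)"
    unfolding Echain_block_bound using N by (simp add: field_simps)
  also have "\<dots> \<le> (Fhom K (h + \<beta>) + Fhom K (h - \<beta>)) / 2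
      + ?D * ((1 + real N * real N powr (-\<gamma>)) / real N)"
    using \<open>\<beta> \<ge> 0\<close> switch_rate_mono by (intro add_left_mono mult_left_mono divide_right_mono) auto
  finally show ?thesis .
qed

text \<open>Averaging the pointwise lower bound; C is the uniform constant of \<open>Zpot_const_lower\<close>
  for the two values \<open>h \<plusminus> \<beta>\<close> of the potential.\<close>
lemma quenched_lower:
  assumes "\<gamma> \<ge> 0" "\<epsilon> > 0"
  shows "\<exists>C. \<forall>N\<ge>1. (Fhom K (h + \<beta>) + Fhom K (h - \<beta>)) / 2 - \<epsilon>
      - C * ((1 + real N * real N powr (-\<gamma>)) / real N) \<le> EN \<gamma> N (\<lambda>\<omega>. ln (Zpin K N \<beta> h \<omega>) / real N)"
proof -
  obtain C1 where C1: "C1 \<ge> 0"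
    "\<And>l. l \<ge> 1 \<Longrightarrow> (Fhom K (h + \<beta>) - \<epsilon>) * real l - C1 \<le> ln (Zpot K (\<lambda>_. h + \<beta>) l)"
    using Zpot_const_lower[OF \<open>\<epsilon> > 0\<close>] by blast
  obtain C2 where C2: "C2 \<ge> 0"
    "\<And>l. l \<ge> 1 \<Longrightarrow> (Fhom K (h - \<beta>) - \<epsilon>) * real l - C2 \<le> ln (Zpot K (\<lambda>_. h - \<beta>) l)"
    using Zpot_const_lower[OF \<open>\<epsilon> > 0\<close>] by blast
  define C where "C = max C1 C2"
  have C: "C \<ge> 0" unfolding C_def using C1 by simp
  have block: "(Fhom K x - \<epsilon>) * real l - C \<le> ln (Zpot K (\<lambda>_. x) l)"
    if "x \<in> {h + \<beta>, h - \<beta>}" "l \<ge> 1" for x l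
    using that C1(2)[of l] C2(2)[of l] unfolding C_def by auto
  have "(Fhom K (h + \<beta>) + Fhom K (h - \<beta>)) / 2 - \<epsilon> - C * ((1 + real N * real N powr (-\<gamma>)) / real N)
      \<le> EN \<gamma> N (\<lambda>\<omega>. ln (Zpin K N \<beta> h \<omega>) / real N)" if N: "N \<ge> 1" for N
  proof -
    have "(Fhom K (h + \<beta>) + Fhom K (h - \<beta>)) / 2 - \<epsilon> - C * ((1 + real N * real N powr (-\<gamma>)) / real N)
        \<le> (Fhom K (h + \<beta>) + Fhom K (h - \<beta>)) / 2 - \<epsilon> - C * ((1 + real (N - 1) * real N powr (-\<gamma>)) / real N)"
      using C switch_rate_mono by (intro diff_left_mono mult_left_mono divide_right_mono) auto
    also have "\<dots> = Echain \<gamma> N N (\<lambda>\<omega>. ((\<Sum>i\<in>{1..N}. Fhom K (\<beta> * \<omega> i + h))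
        + (- C) * (1 + real (card (switches \<omega> N))) + (- real N * \<epsilon>)) / real N)"
      unfolding Echain_block_bound using N by (simp add: field_simps)
    also have "\<dots> \<le> EN \<gamma> N (\<lambda>\<omega>. ln (Zpin K N \<beta> h \<omega>) / real N)"
      unfolding EN_eq_Echain using log_Zpin_lower[where \<beta> = \<beta> and h = h, OF N _ C block]
      by (intro Echain_mono divide_right_mono \<open>\<gamma> \<ge> 0\<close>) (auto simp: algebra_simps)
    finally show ?thesis .
  qed
  then show ?thesis by blast
qed

end

theorem mainTheorem4:
  fixes \<alpha> \<gamma> \<beta> h :: real and L K :: "nat \<Rightarrow> real"
  assumes "0 < \<gamma>" "\<gamma> < 1"
    and "\<alpha> \<ge> 0"
    and "slowly_varying L"
    and "\<And>n. n \<ge> 1 \<Longrightarrow> K n = L n * real n powr (-(1 + \<alpha>))"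
    and "(\<lambda>n. K (Suc n)) sums 1"
    and "\<beta> \<ge> 0"
  shows "(\<lambda>N. EN \<gamma> N (\<lambda>\<omega>. ln (Zpin K N \<beta> h \<omega>) / real N)) \<longlonglongrightarrow> Fquenched K \<beta> h"
proof -
  obtain c0 where "renewal_kernel K c0 (2 + \<alpha>)"
    using renewal_kernel_of_regular_variation[OF assms(4,5,6)] .
  then interpret renewal_kernel K c0 "2 + \<alpha>" .
  have "(\<lambda>N. EN \<gamma> N (\<lambda>\<omega>. ln (Zpin K N \<beta> h \<omega>) / real N))
      \<longlonglongrightarrow> (Fhom K (h + \<beta>) + Fhom K (h - \<beta>)) / 2"
  proof (rule tendsto_squeeze_eps)
    show "\<And>N. N \<ge> 1 \<Longrightarrow> EN \<gamma> N (\<lambda>\<omega>. ln (Zpin K N \<beta> h \<omega>) / real N)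
        \<le> (Fhom K (h + \<beta>) + Fhom K (h - \<beta>)) / 2 + (2 * ln (real N + 1) + (\<bar>h\<bar> + \<beta>))
          * ((1 + real N * real N powr (-\<gamma>)) / real N)"
      using quenched_upper assms(1,7) by simp
    show "(\<lambda>N. (2 * ln (real N + 1) + (\<bar>h\<bar> + \<beta>)) * ((1 + real N * real N powr (-\<gamma>)) / real N))
        \<longlonglongrightarrow> 0" using assms(1,2) by real_asymp
    show "(\<lambda>N. (1 + real N * real N powr (-\<gamma>)) / real N) \<longlonglongrightarrow> 0" using assms(1,2) by real_asymp
  qed (use quenched_lower assms(1) in simp)
  then show ?thesis unfolding Fquenched_eq_average[OF assms(7)] .
qed

end
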